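(* There exists $n_0$ such that for all $n\ge n_0$, $\operatorname{op}_{n,4}(123) > \operatorname{op}_{n,3}(123)$.
   Context: An ordered set partition of $[n]$ into $k$ blocks is a sequence $B_1/B_2/\cdots/B_k$ of nonempty, pairwise disjoint subsets of $[n]$ whose union is $[n]$; the order of the blocks matters, but not the order of elements within a block. Such a partition contains the pattern $123$ if there are block indices $i_1<i_2<i_3$ and elements $b_j\in B_{i_j}$ with $b_1<b_2<b_3$; otherwise it avoids $123$. $\operatorname{op}_{n,k}(123)$ is the number of $123$-avoiding ordered partitions of $[n]$ into $k$ blocks. *)

theory Defs
  imports Main
begin

definition ordered_set_partitions :: "nat \<Rightarrow> nat \<Rightarrow> nat set list set" where
  "ordered_set_partitions n k =
     {bs. length bs = k \<and> (\<forall>i<k. bs ! i \<noteq> {}) \<and>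
          (\<forall>i<k. \<forall>j<k. i \<noteq> j \<longrightarrow> bs ! i \<inter> bs ! j = {}) \<and>
          (\<Union>i<k. bs ! i) = {1..n}}"

definition contains_123 :: "nat set list \<Rightarrow> bool" where
  "contains_123 bs \<longleftrightarrow>
     (\<exists>i1 i2 i3 b1 b2 b3. i1 < i2 \<and> i2 < i3 \<and> i3 < length bs \<and>
        b1 \<in> bs ! i1 \<and> b2 \<in> bs ! i2 \<and> b3 \<in> bs ! i3 \<and> b1 < b2 \<and> b2 < b3)"

definition op_123 :: "nat \<Rightarrow> nat \<Rightarrow> nat" where
  "op_123 n k = card {bs \<in> ordered_set_partitions n k. \<not> contains_123 bs}"

end

theory Submission
  imports Defs
begin

(* Let [A, B, C] avoid 123 and look at the block containing n. If n shares it with other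
   elements, splitting off {n} as a new block right before it gives a 123-avoiding partition
   into four blocks, because the maximum n can only play the role of the 3. If n is alone in
   the first or second block and the other two blocks have at least two elements, moving
   minima into new singleton blocks works similarly. These five injections have pairwise
   disjoint images, told apart by the position of the block containing n and whether n is
   alone there. At most 5n avoiders escape them (n alone in the last block, or n and another
   element forming two singleton blocks), whereas the 6(n - 8) avoiders
   [{a}, {b}, {1}, rest] with 1 < b < 8 \<le> a < n have n in the last block and so lie outside
   all images. *)

definition increasing_triple :: "nat set \<Rightarrow> nat set \<Rightarrow> nat set \<Rightarrow> bool" where
  "increasing_triple A B C \<longleftrightarrow> (\<exists>a\<in>A. \<exists>b\<in>B. \<exists>c\<in>C. a < b \<and> b < c)"

lemma increasing_triple_mono:
  "increasing_triple A B C \<Longrightarrow> A \<subseteq> A' \<Longrightarrow> B \<subseteq> B' \<Longrightarrow> C \<subseteq> C' \<Longrightarrow> increasing_triple A' B' C'"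
  unfolding increasing_triple_def by blast

lemma not_increasing_triple_if_first_dominates:
  "\<forall>a\<in>A. \<forall>b\<in>B. b \<le> a \<Longrightarrow> \<not> increasing_triple A B C"
  unfolding increasing_triple_def by force

lemma not_increasing_triple_if_second_dominates:
  "\<forall>b\<in>B. \<forall>c\<in>C. c \<le> b \<Longrightarrow> \<not> increasing_triple A B C"
  unfolding increasing_triple_def by force

lemma not_increasing_triple_max_first: "B \<subseteq> {..n} \<Longrightarrow> \<not> increasing_triple {n} B C"
  unfolding increasing_triple_def by force

lemma not_increasing_triple_max_second: "C \<subseteq> {..n} \<Longrightarrow> \<not> increasing_triple A {n} C"
  unfolding increasing_triple_def by force

lemma contains_123_iff:
  "contains_123 bs \<longleftrightarrow>
     (\<exists>k<length bs. \<exists>j<k. \<exists>i<j. increasing_triple (bs ! i) (bs ! j) (bs ! k))"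
  unfolding contains_123_def increasing_triple_def by blast

lemma contains_123_3: "contains_123 [A, B, C] \<longleftrightarrow> increasing_triple A B C"
  by (simp add: contains_123_iff numeral_eq_Suc Ex_less_Suc)

lemma contains_123_4:
  "contains_123 [A, B, C, D] \<longleftrightarrow>
     increasing_triple A B C \<or> increasing_triple A B D \<or> increasing_triple A C D \<or>
     increasing_triple B C D"
  by (auto simp: contains_123_iff numeral_eq_Suc Ex_less_Suc)

lemma ordered_set_partitions_3:
  "[A, B, C] \<in> ordered_set_partitions n 3 \<longleftrightarrow>
     A \<noteq> {} \<and> B \<noteq> {} \<and> C \<noteq> {} \<and> A \<inter> B = {} \<and> A \<inter> C = {} \<and> B \<inter> C = {} \<and>
     A \<union> B \<union> C = {1..n}"
  by (auto simp: ordered_set_partitions_def numeral_eq_Suc All_less_Suc lessThan_Suc Int_commute)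

lemma ordered_set_partitions_4:
  "[A, B, C, D] \<in> ordered_set_partitions n 4 \<longleftrightarrow>
     A \<noteq> {} \<and> B \<noteq> {} \<and> C \<noteq> {} \<and> D \<noteq> {} \<and>
     A \<inter> B = {} \<and> A \<inter> C = {} \<and> A \<inter> D = {} \<and> B \<inter> C = {} \<and> B \<inter> D = {} \<and> C \<inter> D = {} \<and>
     A \<union> B \<union> C \<union> D = {1..n}"
  by (auto simp: ordered_set_partitions_def numeral_eq_Suc All_less_Suc lessThan_Suc Int_commute)

lemma ordered_set_partitions_subset_lists:
  "ordered_set_partitions n k \<subseteq> {bs. set bs \<subseteq> Pow {1..n} \<and> length bs = k}"
  unfolding ordered_set_partitions_def by (force simp: in_set_conv_nth)

lemma finite_ordered_set_partitions: "finite (ordered_set_partitions n k)"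
  by (rule finite_subset[OF ordered_set_partitions_subset_lists finite_lists_length_eq]) simp

definition avoiders :: "nat \<Rightarrow> nat \<Rightarrow> nat set list set" where
  "avoiders n k = {bs \<in> ordered_set_partitions n k. \<not> contains_123 bs}"

lemma op_123_eq_card_avoiders: "op_123 n k = card (avoiders n k)"
  unfolding op_123_def avoiders_def ..

lemma finite_avoiders: "finite (avoiders n k)"
  unfolding avoiders_def using finite_ordered_set_partitions by simp

lemma avoiders_3_iff:
  "[A, B, C] \<in> avoiders n 3 \<longleftrightarrow>
     [A, B, C] \<in> ordered_set_partitions n 3 \<and> \<not> increasing_triple A B C"
  by (simp add: avoiders_def contains_123_3)

lemma avoiders_4_iff:
  "[A, B, C, D] \<in> avoiders n 4 \<longleftrightarrow>
     [A, B, C, D] \<in> ordered_set_partitions n 4 \<and>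
     \<not> increasing_triple A B C \<and> \<not> increasing_triple A B D \<and> \<not> increasing_triple A C D \<and>
     \<not> increasing_triple B C D"
  by (simp add: avoiders_def contains_123_4)

lemma avoiders_3_cases:
  assumes "bs \<in> avoiders n 3"
  obtains A B C where "bs = [A, B, C]"
  using assms by (auto simp: avoiders_def ordered_set_partitions_def numeral_eq_Suc length_Suc_conv)

lemma avoiders_3D:
  assumes "[A, B, C] \<in> avoiders n 3"
  shows "A \<union> B \<union> C = {1..n}" "A \<inter> B = {}" "A \<inter> C = {}" "B \<inter> C = {}"
    "A \<noteq> {}" "B \<noteq> {}" "C \<noteq> {}" "finite A" "finite B" "finite C"
    "\<not> increasing_triple A B C"
proof -
  show *: "A \<union> B \<union> C = {1..n}" "A \<inter> B = {}" "A \<inter> C = {}" "B \<inter> C = {}"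
    "A \<noteq> {}" "B \<noteq> {}" "C \<noteq> {}" "\<not> increasing_triple A B C"
    using assms by (simp_all add: avoiders_3_iff ordered_set_partitions_3)
  show "finite A" "finite B" "finite C"
    using finite_subset[of _ "{1..n}"] *(1) by auto
qed

definition max_shared :: "nat \<Rightarrow> nat \<Rightarrow> nat set list set" where
  "max_shared n i = {bs \<in> avoiders n 3. n \<in> bs ! i \<and> bs ! i \<noteq> {n}}"

definition isolate_max :: "nat \<Rightarrow> nat \<Rightarrow> nat set list \<Rightarrow> nat set list" where
  "isolate_max n i bs = take i bs @ {n} # (bs ! i - {n}) # drop (Suc i) bs"

lemma inj_on_isolate_max: "inj_on (isolate_max n i) {bs. i < length bs \<and> n \<in> bs ! i}"
proof (rule inj_onI)
  fix bs cs
  assume "bs \<in> {bs. i < length bs \<and> n \<in> bs ! i}" "cs \<in> {bs. i < length bs \<and> n \<in> bs ! i}"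
  then have bs: "i < length bs" "n \<in> bs ! i" and cs: "i < length cs" "n \<in> cs ! i"
    by simp_all
  assume "isolate_max n i bs = isolate_max n i cs"
  then have "take i bs = take i cs" "bs ! i - {n} = cs ! i - {n}" "drop (Suc i) bs = drop (Suc i) cs"
    using bs(1) cs(1) by (auto simp: isolate_max_def append_eq_append_conv)
  moreover have "bs ! i = cs ! i"
    using calculation(2) bs(2) cs(2) by (metis insert_Diff)
  ultimately show "bs = cs"
    using id_take_nth_drop[OF bs(1)] id_take_nth_drop[OF cs(1)] by metis
qed

lemma isolate_max_avoiders:
  assumes "bs \<in> max_shared n i" "i < 3"
  shows "isolate_max n i bs \<in> avoiders n 4"
proof -
  obtain A B C where bs: "bs = [A, B, C]"
    using assms(1) avoiders_3_cases unfolding max_shared_def by blast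
  have av: "[A, B, C] \<in> avoiders n 3" and max: "n \<in> bs ! i" "bs ! i - {n} \<noteq> {}"
    using assms(1) unfolding bs max_shared_def by auto
  note facts = avoiders_3D[OF av]
  have bounded: "A - {n} \<subseteq> {..n}" "B - {n} \<subseteq> {..n}" "C - {n} \<subseteq> {..n}" "B \<subseteq> {..n}" "C \<subseteq> {..n}"
    using facts(1) by auto
  from assms(2) consider "i = 0" | "i = 1" | "i = 2" by linarith
  then show ?thesis
  proof cases
    case 1
    have "\<not> increasing_triple (A - {n}) B C"
      using facts(11) increasing_triple_mono[of "A - {n}" B C A B C] by blast
    with 1 show ?thesis using facts max bounded unfolding bs
      by (simp add: isolate_max_def avoiders_4_iff ordered_set_partitions_4
          not_increasing_triple_max_first) blast
  next
    case 2
    have "\<not> increasing_triple A (B - {n}) C"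
      using facts(11) increasing_triple_mono[of A "B - {n}" C A B C] by blast
    with 2 show ?thesis using facts max bounded unfolding bs
      by (simp add: isolate_max_def avoiders_4_iff ordered_set_partitions_4
          not_increasing_triple_max_first not_increasing_triple_max_second) blast
  next
    case 3
    have "\<not> increasing_triple A B (C - {n})" "\<not> increasing_triple A B {n}"
      using facts(11) max increasing_triple_mono[of A B _ A B C] unfolding 3 bs by auto
    with 3 show ?thesis using facts max bounded unfolding bs
      by (simp add: isolate_max_def avoiders_4_iff ordered_set_partitions_4
          not_increasing_triple_max_second) blast
  qed
qed

definition max_alone :: "nat \<Rightarrow> nat \<Rightarrow> nat set list set" where
  "max_alone n i = {bs \<in> avoiders n 3. bs ! i = {n} \<and> (\<forall>j<3. j \<noteq> i \<longrightarrow> 2 \<le> card (bs ! j))}"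

fun relocate_max :: "nat \<Rightarrow> nat \<Rightarrow> nat set list \<Rightarrow> nat set list" where
  "relocate_max n 0 [_, B, C] = [insert n (B - {Min B}), {Min B}, C - {Min C}, {Min C}]"
| "relocate_max n (Suc 0) [A, _, C] = [A - {Min A}, {n, Min A}, C - {Min C}, {Min C}]"

lemma max_alone_0E:
  assumes "bs \<in> max_alone n 0"
  obtains B C where "bs = [{n}, B, C]" "[{n}, B, C] \<in> avoiders n 3" "2 \<le> card B" "2 \<le> card C"
proof -
  obtain A B C where "bs = [A, B, C]"
    using assms avoiders_3_cases unfolding max_alone_def by blast
  then show thesis
    using that assms by (auto simp: max_alone_def numeral_eq_Suc All_less_Suc)
qed

lemma max_alone_1E:
  assumes "bs \<in> max_alone n 1"
  obtains A C where "bs = [A, {n}, C]" "[A, {n}, C] \<in> avoiders n 3" "2 \<le> card A" "2 \<le> card C"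
proof -
  obtain A B C where "bs = [A, B, C]"
    using assms avoiders_3_cases unfolding max_alone_def by blast
  then show thesis
    using that assms by (auto simp: max_alone_def numeral_eq_Suc All_less_Suc)
qed

lemma Diff_singleton_nonempty_if_card_ge_2: "2 \<le> card A \<Longrightarrow> A - {x} \<noteq> {}"
  using card_mono[of "{x}" A] by (auto simp: Diff_eq_empty_iff)

lemma relocate_max_0_avoiders:
  assumes "bs \<in> max_alone n 0"
  shows "relocate_max n 0 bs \<in> avoiders n 4"
proof -
  obtain B C where bs: "bs = [{n}, B, C]" and av: "[{n}, B, C] \<in> avoiders n 3"
    and card: "2 \<le> card B" "2 \<le> card C"
    using assms max_alone_0E by blast
  note facts = avoiders_3D[OF av]
  have min: "Min B \<in> B" "Min C \<in> C" "\<forall>b\<in>B. Min B \<le> b" "\<forall>c\<in>C. Min C \<le> c"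
    using facts by auto
  have "insert n (B - {Min B}) \<union> {Min B} \<union> (C - {Min C}) \<union> {Min C} = {n} \<union> B \<union> C"
    using min(1,2) by blast
  moreover have "n \<notin> B" "n \<notin> C" "B \<inter> C = {}"
    using facts(2-4) by auto
  ultimately have "[insert n (B - {Min B}), {Min B}, C - {Min C}, {Min C}] \<in> ordered_set_partitions n 4"
    using facts(1) min(1,2) Diff_singleton_nonempty_if_card_ge_2[OF card(1)]
      Diff_singleton_nonempty_if_card_ge_2[OF card(2)]
    unfolding ordered_set_partitions_4 by auto
  moreover have "Min B \<le> n"
    using min(1) facts(1) by auto
  then have "\<not> increasing_triple (insert n (B - {Min B})) {Min B} X" for X
    using min by (intro not_increasing_triple_if_first_dominates) auto
  moreover have "\<not> increasing_triple X (C - {Min C}) {Min C}" for X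
    using min by (intro not_increasing_triple_if_second_dominates) auto
  ultimately show ?thesis
    unfolding bs by (simp add: avoiders_4_iff)
qed

lemma relocate_max_1_avoiders:
  assumes "bs \<in> max_alone n 1"
  shows "relocate_max n 1 bs \<in> avoiders n 4"
proof -
  obtain A C where bs: "bs = [A, {n}, C]" and av: "[A, {n}, C] \<in> avoiders n 3"
    and card: "2 \<le> card A" "2 \<le> card C"
    using assms max_alone_1E by blast
  note facts = avoiders_3D[OF av]
  have min: "Min A \<in> A" "Min C \<in> C" "\<forall>a\<in>A. Min A \<le> a" "\<forall>c\<in>C. Min C \<le> c"
    using facts by auto
  have "A - {Min A} \<union> {n, Min A} \<union> (C - {Min C}) \<union> {Min C} = A \<union> {n} \<union> C"
    using min(1,2) by blast
  moreover have "n \<notin> A" "n \<notin> C" "A \<inter> C = {}"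
    using facts(2-4) by auto
  ultimately have "[A - {Min A}, {n, Min A}, C - {Min C}, {Min C}] \<in> ordered_set_partitions n 4"
    using facts(1) min(1,2) Diff_singleton_nonempty_if_card_ge_2[OF card(1)]
      Diff_singleton_nonempty_if_card_ge_2[OF card(2)]
    unfolding ordered_set_partitions_4 by auto
  moreover have "\<not> increasing_triple (A - {Min A}) {n, Min A} X" if "X \<subseteq> {..n}" for X
    using min that unfolding increasing_triple_def by force
  moreover have "C - {Min C} \<subseteq> {..n}" "{Min C} \<subseteq> {..n}"
    using facts(1) min(2) by auto
  moreover have "\<not> increasing_triple X (C - {Min C}) {Min C}" for X
    using min by (intro not_increasing_triple_if_second_dominates) auto
  ultimately show ?thesis
    unfolding bs by (simp add: avoiders_4_iff)
qed

lemma eq_if_Min_eq_Diff_Min_eq: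
  "finite A \<Longrightarrow> A \<noteq> {} \<Longrightarrow> finite B \<Longrightarrow> B \<noteq> {} \<Longrightarrow> Min A = Min B \<Longrightarrow>
     A - {Min A} = B - {Min B} \<Longrightarrow> A = B"
  by (metis Min_in insert_Diff)

lemma inj_on_relocate_max_0: "inj_on (relocate_max n 0) (max_alone n 0)"
proof (rule inj_onI)
  fix bs cs assume "bs \<in> max_alone n 0" "cs \<in> max_alone n 0"
    and eq: "relocate_max n 0 bs = relocate_max n 0 cs"
  then obtain B C B' C' where bs: "bs = [{n}, B, C]" "[{n}, B, C] \<in> avoiders n 3"
    and cs: "cs = [{n}, B', C']" "[{n}, B', C'] \<in> avoiders n 3"
    by (metis max_alone_0E)
  note facts = avoiders_3D[OF bs(2)] avoiders_3D[OF cs(2)]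
  have "insert n (B - {Min B}) = insert n (B' - {Min B'})" "Min B = Min B'"
    "C - {Min C} = C' - {Min C'}" "Min C = Min C'"
    using eq unfolding bs cs by auto
  moreover have "n \<notin> B - {Min B}" "n \<notin> B' - {Min B'}"
    using facts(2,13) by auto
  ultimately have "B = B'" "C = C'"
    using facts(6,7,9,10,17,18,20,21) by (simp_all add: insert_ident eq_if_Min_eq_Diff_Min_eq)
  then show "bs = cs"
    unfolding bs cs by simp
qed

lemma inj_on_relocate_max_1: "inj_on (relocate_max n 1) (max_alone n 1)"
proof (rule inj_onI)
  fix bs cs assume "bs \<in> max_alone n 1" "cs \<in> max_alone n 1"
    and eq: "relocate_max n 1 bs = relocate_max n 1 cs"
  then obtain A C A' C' where bs: "bs = [A, {n}, C]" "[A, {n}, C] \<in> avoiders n 3"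
    and cs: "cs = [A', {n}, C']" "[A', {n}, C'] \<in> avoiders n 3"
    by (metis max_alone_1E)
  note facts = avoiders_3D[OF bs(2)] avoiders_3D[OF cs(2)]
  have parts: "A - {Min A} = A' - {Min A'}" "{n, Min A} = {n, Min A'}"
    "C - {Min C} = C' - {Min C'}" "Min C = Min C'"
    using eq unfolding bs cs by auto
  have "Min A \<in> A" "Min A' \<in> A'"
    using facts(5,8,16,19) by simp_all
  then have "Min A \<noteq> n" "Min A' \<noteq> n"
    using facts(2,13) by auto
  with parts(2) have "Min A = Min A'"
    by (auto simp: doubleton_eq_iff)
  then have "A = A'" "C = C'"
    using eq_if_Min_eq_Diff_Min_eq[OF facts(8,5,19,16) _ parts(1)]
      eq_if_Min_eq_Diff_Min_eq[OF facts(10,7,21,18) parts(4,3)] by simp_all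
  then show "bs = cs"
    unfolding bs cs by simp
qed

definition exceptional :: "nat \<Rightarrow> nat set list set" where
  "exceptional n = (\<Union>x\<in>{1..n}. set
     [[{n}, {x}, {1..<n} - {x}], [{n}, {1..<n} - {x}, {x}],
      [{x}, {n}, {1..<n} - {x}], [{1..<n} - {x}, {n}, {x}],
      [{x..<n}, {1..<x}, {n}]])"

lemma card_exceptional_le: "card (exceptional n) \<le> 5 * n"
proof -
  have "card (exceptional n) \<le> (\<Sum>x\<in>{1..n}. 5)"
    unfolding exceptional_def
    by (intro order_trans[OF card_UN_le sum_mono] order_trans[OF card_length]) simp_all
  then show ?thesis
    by simp
qed

lemma singleton_if_card_less_2: "finite A \<Longrightarrow> A \<noteq> {} \<Longrightarrow> card A < 2 \<Longrightarrow> \<exists>x. A = {x}"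
  using card_gt_0_iff[of A] card_1_singleton_iff[of A] by simp

lemma complement_of_max_and_singleton:
  fixes n x :: nat
  assumes "insert n (insert x Z) = {1..n}" "n \<notin> Z" "x \<notin> Z"
  shows "Z = {1..<n} - {x}" "x \<in> {1..n}"
proof -
  have "Z = {1..n} - {n} - {x}" "x \<in> {1..n}"
    using assms by blast+
  then show "Z = {1..<n} - {x}" "x \<in> {1..n}"
    by auto
qed

lemma avoiders_3_max_first:
  assumes "[{n}, B, C] \<in> avoiders n 3"
  shows "[{n}, B, C] \<in> max_alone n 0 \<union> exceptional n"
proof (cases "2 \<le> card B \<and> 2 \<le> card C")
  case True
  then show ?thesis
    using assms by (simp add: max_alone_def numeral_eq_Suc All_less_Suc)
next
  case False
  note facts = avoiders_3D[OF assms]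
  from False consider x where "B = {x}" | x where "C = {x}"
    using singleton_if_card_less_2[OF facts(9,6)] singleton_if_card_less_2[OF facts(10,7)]
    by fastforce
  then show ?thesis
  proof cases
    case 1
    then have "C = {1..<n} - {x}" "x \<in> {1..n}"
      using complement_of_max_and_singleton[of n x C] facts(1-4) by auto
    then show ?thesis
      unfolding exceptional_def 1 by (intro UnI2 UN_I[of x]) simp_all
  next
    case 2
    then have "B = {1..<n} - {x}" "x \<in> {1..n}"
      using complement_of_max_and_singleton[of n x B] facts(1-4) by (auto simp: insert_commute)
    then show ?thesis
      unfolding exceptional_def 2 by (intro UnI2 UN_I[of x]) simp_all
  qed
qed

lemma avoiders_3_max_second:
  assumes "[A, {n}, C] \<in> avoiders n 3"
  shows "[A, {n}, C] \<in> max_alone n 1 \<union> exceptional n"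
proof (cases "2 \<le> card A \<and> 2 \<le> card C")
  case True
  then show ?thesis
    using assms by (simp add: max_alone_def numeral_eq_Suc All_less_Suc)
next
  case False
  note facts = avoiders_3D[OF assms]
  from False consider x where "A = {x}" | x where "C = {x}"
    using singleton_if_card_less_2[OF facts(8,5)] singleton_if_card_less_2[OF facts(10,7)]
    by fastforce
  then show ?thesis
  proof cases
    case 1
    then have "C = {1..<n} - {x}" "x \<in> {1..n}"
      using complement_of_max_and_singleton[of n x C] facts(1-4) by (auto simp: insert_commute)
    then show ?thesis
      unfolding exceptional_def 1 by (intro UnI2 UN_I[of x]) simp_all
  next
    case 2
    then have "A = {1..<n} - {x}" "x \<in> {1..n}"
      using complement_of_max_and_singleton[of n x A] facts(1-4) by (auto simp: insert_commute)
    then show ?thesis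
      unfolding exceptional_def 2 by (intro UnI2 UN_I[of x]) simp_all
  qed
qed

lemma avoiders_3_max_last:
  assumes "[A, B, {n}] \<in> avoiders n 3"
  shows "[A, B, {n}] \<in> exceptional n"
proof -
  note facts = avoiders_3D[OF assms]
  define x where "x = Min A"
  have x: "x \<in> A" "\<forall>a\<in>A. x \<le> a"
    using facts(5,8) unfolding x_def by simp_all
  have "n \<notin> A" "n \<notin> B"
    using facts(3,4) by auto
  have "x \<in> {1..n}"
    using x(1) facts(1) by blast
  with \<open>n \<notin> A\<close> x(1) have "x < n"
    by (metis atLeastAtMost_iff le_neq_implies_less)
  have B_below: "\<forall>b\<in>B. b < x"
  proof (rule ccontr)
    assume "\<not> (\<forall>b\<in>B. b < x)"
    then obtain b where "b \<in> B" "x < b"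
      using facts(2) x(1) by (auto simp: not_less order.order_iff_strict)
    moreover have "b \<in> {1..n}"
      using \<open>b \<in> B\<close> facts(1) by blast
    then have "b < n"
      using \<open>b \<in> B\<close> \<open>n \<notin> B\<close> by (metis atLeastAtMost_iff le_neq_implies_less)
    ultimately have "increasing_triple A B {n}"
      unfolding increasing_triple_def using x(1) by blast
    then show False
      using facts(11) by blast
  qed
  have "B = {1..<x}"
  proof (intro equalityI subsetI)
    fix b assume "b \<in> B"
    then show "b \<in> {1..<x}"
      using B_below facts(1) by fastforce
  next
    fix b assume "b \<in> {1..<x}"
    then have "b \<in> {1..n}" "b \<notin> A" "b \<noteq> n"
      using x \<open>x < n\<close> by auto
    then show "b \<in> B"
      using facts(1) by blast
  qed
  moreover have "A = {x..<n}"
  proof (intro equalityI subsetI)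
    fix a assume "a \<in> A"
    then show "a \<in> {x..<n}"
      using x(2) facts(1) \<open>n \<notin> A\<close> by (fastforce simp: order.order_iff_strict)
  next
    fix a assume "a \<in> {x..<n}"
    then have "a \<in> {1..n}" "a \<notin> B" "a \<noteq> n"
      using B_below \<open>x \<in> {1..n}\<close> by auto
    then show "a \<in> A"
      using facts(1) by blast
  qed
  ultimately show ?thesis
    unfolding exceptional_def using \<open>x \<in> {1..n}\<close> by (intro UN_I[of x]) simp_all
qed

lemma avoiders_3_cover:
  assumes "1 \<le> n"
  shows "avoiders n 3 \<subseteq> max_shared n 0 \<union> max_shared n 1 \<union> max_shared n 2 \<union>
    max_alone n 0 \<union> max_alone n 1 \<union> exceptional n"
proof
  fix bs assume bs: "bs \<in> avoiders n 3"
  then obtain A B C where ABC: "bs = [A, B, C]"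
    by (rule avoiders_3_cases)
  have "n \<in> A \<union> B \<union> C"
    using avoiders_3D(1)[of A B C n] bs assms unfolding ABC by auto
  then consider "\<exists>i<3. n \<in> bs ! i \<and> bs ! i \<noteq> {n}" | "A = {n}" | "B = {n}" | "C = {n}"
    unfolding ABC by (auto simp: numeral_eq_Suc Ex_less_Suc)
  then show "bs \<in> max_shared n 0 \<union> max_shared n 1 \<union> max_shared n 2 \<union>
    max_alone n 0 \<union> max_alone n 1 \<union> exceptional n"
  proof cases
    case 1
    then show ?thesis
      using bs by (auto simp: max_shared_def numeral_eq_Suc Ex_less_Suc)
  next
    case 2
    then show ?thesis
      using avoiders_3_max_first bs unfolding ABC by blast
  next
    case 3
    then show ?thesis
      using avoiders_3_max_second bs unfolding ABC by blast
  next
    case 4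
    then show ?thesis
      using avoiders_3_max_last bs unfolding ABC by blast
  qed
qed

definition extra_avoider :: "nat \<Rightarrow> nat \<times> nat \<Rightarrow> nat set list" where
  "extra_avoider n = (\<lambda>(a, b). [{a}, {b}, {1}, insert n ({2..<n} - {a, b})])"

lemma extra_avoider_avoiders:
  assumes "1 < b" "b < a" "a < n"
  shows "extra_avoider n (a, b) \<in> avoiders n 4"
proof -
  have "[{a}, {b}, {1}, insert n ({2..<n} - {a, b})] \<in> ordered_set_partitions n 4"
    using assms unfolding ordered_set_partitions_4 by auto
  moreover have "\<not> increasing_triple {a} {b} X" "\<not> increasing_triple {a} {1} X"
    "\<not> increasing_triple {b} {1} X" for X
    using assms by (auto intro!: not_increasing_triple_if_first_dominates)
  ultimately show ?thesis
    by (simp add: extra_avoider_def avoiders_4_iff)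
qed

lemma inj_extra_avoider: "inj (extra_avoider n)"
  by (rule injI) (auto simp: extra_avoider_def split: prod.splits)

definition max_signature :: "nat \<Rightarrow> nat set list \<Rightarrow> nat \<times> bool" where
  "max_signature n bs = (length (takeWhile (\<lambda>B. n \<notin> B) bs), {n} \<in> set bs)"

lemma max_signature_isolate_max:
  assumes "bs \<in> max_shared n i" "i < 3"
  shows "max_signature n (isolate_max n i bs) = (i, True)"
proof -
  obtain A B C where bs: "bs = [A, B, C]"
    using assms(1) avoiders_3_cases unfolding max_shared_def by blast
  have "n \<in> bs ! i" "A \<inter> B = {}" "A \<inter> C = {}" "B \<inter> C = {}"
    using assms(1) avoiders_3D[of A B C n] unfolding bs max_shared_def by auto
  with assms(2) show ?thesis
    unfolding bs by (auto simp: max_signature_def isolate_max_def numeral_eq_Suc less_Suc_eq)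
qed

lemma max_signature_relocate_max_0:
  assumes "bs \<in> max_alone n 0"
  shows "max_signature n (relocate_max n 0 bs) = (0, False)"
proof -
  obtain B C where bs: "bs = [{n}, B, C]" and av: "[{n}, B, C] \<in> avoiders n 3"
    and card: "2 \<le> card B"
    using assms max_alone_0E by blast
  note facts = avoiders_3D[OF av]
  have "Min B \<in> B" "Min C \<in> C" "n \<notin> B" "n \<notin> C"
    using facts by auto
  moreover have "B - {Min B} \<noteq> {}"
    using card by (rule Diff_singleton_nonempty_if_card_ge_2)
  ultimately show ?thesis
    unfolding bs by (auto simp: max_signature_def)
qed

lemma max_signature_relocate_max_1:
  assumes "bs \<in> max_alone n 1"
  shows "max_signature n (relocate_max n 1 bs) = (1, False)"
proof -
  obtain A C where bs: "bs = [A, {n}, C]" and av: "[A, {n}, C] \<in> avoiders n 3"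
    using assms max_alone_1E by blast
  note facts = avoiders_3D[OF av]
  have "Min A \<in> A" "Min C \<in> C" "n \<notin> A" "n \<notin> C"
    using facts by auto
  then show ?thesis
    unfolding bs by (auto simp: max_signature_def)
qed

lemma max_signature_extra_avoider:
  "1 < b \<Longrightarrow> b < a \<Longrightarrow> a < n \<Longrightarrow> fst (max_signature n (extra_avoider n (a, b))) = 3"
  by (simp add: max_signature_def extra_avoider_def numeral_eq_Suc)

definition max_piece :: "nat \<Rightarrow> nat \<Rightarrow> nat set list set" where
  "max_piece n i = (if i < 3 then max_shared n i else max_alone n (i - 3))"

definition max_lift :: "nat \<Rightarrow> nat \<Rightarrow> nat set list \<Rightarrow> nat set list" where
  "max_lift n i = (if i < 3 then isolate_max n i else relocate_max n (i - 3))"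

lemma less_5_cases: "(i::nat) < 5 \<Longrightarrow> i < 3 \<or> i = 3 \<or> i = 4"
  by linarith

lemma max_lift_avoiders: "i < 5 \<Longrightarrow> bs \<in> max_piece n i \<Longrightarrow> max_lift n i bs \<in> avoiders n 4"
  using isolate_max_avoiders relocate_max_0_avoiders relocate_max_1_avoiders
  by (auto simp: max_piece_def max_lift_def dest!: less_5_cases)

lemma inj_on_max_lift: "i < 5 \<Longrightarrow> inj_on (max_lift n i) (max_piece n i)"
proof -
  assume "i < 5"
  moreover have "inj_on (isolate_max n i) (max_shared n i)" if "i < 3"
    by (rule inj_on_subset[OF inj_on_isolate_max])
      (use that in \<open>auto simp: max_shared_def avoiders_def ordered_set_partitions_def\<close>)
  ultimately show ?thesis
    using inj_on_relocate_max_0 inj_on_relocate_max_1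
    by (auto simp: max_piece_def max_lift_def dest!: less_5_cases)
qed

lemma max_signature_max_lift:
  "i < 5 \<Longrightarrow> bs \<in> max_piece n i \<Longrightarrow>
     max_signature n (max_lift n i bs) = (if i < 3 then (i, True) else (i - 3, False))"
  using max_signature_isolate_max max_signature_relocate_max_0 max_signature_relocate_max_1
  by (auto simp: max_piece_def max_lift_def dest!: less_5_cases)

lemma finite_max_piece: "finite (max_piece n i)"
  using finite_avoiders
  by (rule finite_subset[rotated]) (auto simp: max_piece_def max_shared_def max_alone_def)

lemma card_avoiders_3_le:
  assumes "1 \<le> n"
  shows "card (avoiders n 3) \<le> (\<Sum>i<5. card (max_piece n i)) + 5 * n"
proof -
  have "avoiders n 3 \<subseteq> (\<Union>i<5. max_piece n i) \<union> exceptional n"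
    using avoiders_3_cover[OF assms] by (auto simp: max_piece_def numeral_eq_Suc lessThan_Suc)
  then have "card (avoiders n 3) \<le> card ((\<Union>i<5. max_piece n i) \<union> exceptional n)"
    by (rule card_mono[rotated]) (simp add: exceptional_def finite_max_piece)
  also have "\<dots> \<le> card (\<Union>i<5. max_piece n i) + card (exceptional n)"
    by (rule card_Un_le)
  also have "\<dots> \<le> (\<Sum>i<5. card (max_piece n i)) + 5 * n"
    by (intro add_mono card_UN_le card_exceptional_le) simp
  finally show ?thesis .
qed

lemma card_max_lift_images:
  "card (\<Union>i<5. max_lift n i ` max_piece n i) = (\<Sum>i<5. card (max_piece n i))"
proof -
  have "card (\<Union>i<5. max_lift n i ` max_piece n i) = (\<Sum>i<5. card (max_lift n i ` max_piece n i))"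
  proof (rule card_UN_disjoint)
    show "\<forall>i\<in>{..<5}. \<forall>j\<in>{..<5}. i \<noteq> j \<longrightarrow>
      max_lift n i ` max_piece n i \<inter> max_lift n j ` max_piece n j = {}"
    proof (intro ballI impI)
      fix i j :: nat assume ij: "i \<in> {..<5}" "j \<in> {..<5}" "i \<noteq> j"
      then have "(if i < 3 then (i, True) else (i - 3, False)) \<noteq>
        (if j < 3 then (j, True) else (j - 3, False))"
        by auto
      then show "max_lift n i ` max_piece n i \<inter> max_lift n j ` max_piece n j = {}"
        using max_signature_max_lift[of i _ n] max_signature_max_lift[of j _ n] ij by force
    qed
  qed (simp_all add: finite_max_piece)
  also have "\<dots> = (\<Sum>i<5. card (max_piece n i))"
    using inj_on_max_lift by (intro sum.cong refl card_image) simp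
  finally show ?thesis .
qed

lemma card_avoiders_4_ge:
  "(\<Sum>i<5. card (max_piece n i)) + 6 * (n - 8) \<le> card (avoiders n 4)"
proof -
  define L where "L = (\<Union>i<5. max_lift n i ` max_piece n i)"
  define G where "G = extra_avoider n ` ({8..<n} \<times> {2..7})"
  have "fst (max_signature n bs) < 3" if "bs \<in> L" for bs
    using that max_signature_max_lift unfolding L_def by (fastforce split: if_splits)
  moreover have "fst (max_signature n bs) = 3" if "bs \<in> G" for bs
    using that max_signature_extra_avoider unfolding G_def by fastforce
  ultimately have "L \<inter> G = {}"
    by fastforce
  moreover have "L \<union> G \<subseteq> avoiders n 4"
    using max_lift_avoiders extra_avoider_avoiders unfolding L_def G_def by fastforce
  moreover from this have "finite L" "finite G"
    using finite_subset[OF _ finite_avoiders] by blast+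
  ultimately have "card L + card G \<le> card (avoiders n 4)"
    using card_mono[OF finite_avoiders] card_Un_disjoint by metis
  moreover have "card G = 6 * (n - 8)"
    unfolding G_def
    by (simp add: card_image[OF inj_on_subset[OF inj_extra_avoider]] card_cartesian_product)
  ultimately show ?thesis
    unfolding L_def card_max_lift_images by simp
qed

theorem theorem9:
  shows "\<exists>n0::nat. \<forall>n\<ge>n0. op_123 n 4 > op_123 n 3"
proof (intro exI allI impI)
  fix n :: nat assume "49 \<le> n"
  then have "card (avoiders n 3) < card (avoiders n 4)"
    using card_avoiders_3_le[of n] card_avoiders_4_ge[of n] by linarith
  then show "op_123 n 4 > op_123 n 3"
    by (simp add: op_123_eq_card_avoiders)
qed

end
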